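(* Let $(X,d)$ be a compact metric space and $F:X\to 2^X$ a set-valued map which is open, onto and continuous. Then $F$ has the shadowing property if and only if $F^{-1}$ has the shadowing property.
   Context: $2^X$ is the family of nonempty compact subsets of $X$. A set-valued map $F$ is upper semicontinuous if for every $x$ and open $U\supset F(x)$ there is a neighborhood $V$ of $x$ with $F(y)\subset U$ for $y\in V$; lower semicontinuous if for every $x$ and open $U$ with $F(x)\cap U\ne\emptyset$ there is a neighborhood $V$ of $x$ with $F(y)\cap U\neq\emptyset$ for $y\in V$; continuous if both. $F$ is open if $F(U)=\bigcup_{u\in U}F(u)$ is open for every open $U$. $F$ is onto if every $y\in X$ lies in some $F(x)$; then $F^{-1}(y)=\{x:y\in F(x)\}$. For a set-valued map $G$, a $\delta$-pseudo-orbit is a sequence $\{x_n\}_{n\ge0}$ with $d(x_{n+1},G(x_n))<\delta$ for all $n$; a $G$-orbit is $(y_n)$ with $y_{n+1}\in G(y_n)$; $G$ has the shadowing property if for every $\varepsilon>0$ there is $\delta>0$ such that every $\delta$-pseudo-orbit $\{x_n\}$ admits a $G$-orbit $(y_n)$ with $d(x_n,y_n)<\varepsilon$ for all $n$. *)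

theory Defs
  imports "HOL-Analysis.Analysis"
begin

text \<open>The ambient compact metric space is a set X in a metric space type, with the
subspace topology. A set-valued map is a function F :: 'a => 'a set; values are
only relevant at points of X.\<close>

definition sv_map_into :: "'a::metric_space set \<Rightarrow> ('a \<Rightarrow> 'a set) \<Rightarrow> bool" where
  "sv_map_into X F \<longleftrightarrow> (\<forall>x\<in>X. F x \<noteq> {} \<and> compact (F x) \<and> F x \<subseteq> X)"

definition usc_on :: "'a::metric_space set \<Rightarrow> ('a \<Rightarrow> 'a set) \<Rightarrow> bool" where
  "usc_on X F \<longleftrightarrow> (\<forall>x\<in>X. \<forall>U. openin (top_of_set X) U \<and> F x \<subseteq> U \<longrightarrow>
      (\<exists>V. openin (top_of_set X) V \<and> x \<in> V \<and> (\<forall>y\<in>V. F y \<subseteq> U)))"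

definition lsc_on :: "'a::metric_space set \<Rightarrow> ('a \<Rightarrow> 'a set) \<Rightarrow> bool" where
  "lsc_on X F \<longleftrightarrow> (\<forall>x\<in>X. \<forall>U. openin (top_of_set X) U \<and> F x \<inter> U \<noteq> {} \<longrightarrow>
      (\<exists>V. openin (top_of_set X) V \<and> x \<in> V \<and> (\<forall>y\<in>V. F y \<inter> U \<noteq> {})))"

definition sv_continuous_on :: "'a::metric_space set \<Rightarrow> ('a \<Rightarrow> 'a set) \<Rightarrow> bool" where
  "sv_continuous_on X F \<longleftrightarrow> usc_on X F \<and> lsc_on X F"

definition sv_open_map :: "'a::metric_space set \<Rightarrow> ('a \<Rightarrow> 'a set) \<Rightarrow> bool" where
  "sv_open_map X F \<longleftrightarrow> (\<forall>U. openin (top_of_set X) U \<longrightarrow> openin (top_of_set X) (\<Union>u\<in>U. F u))"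

definition sv_onto :: "'a::metric_space set \<Rightarrow> ('a \<Rightarrow> 'a set) \<Rightarrow> bool" where
  "sv_onto X F \<longleftrightarrow> (\<forall>y\<in>X. \<exists>x\<in>X. y \<in> F x)"

definition sv_inverse :: "'a set \<Rightarrow> ('a \<Rightarrow> 'a set) \<Rightarrow> 'a \<Rightarrow> 'a set" where
  "sv_inverse X F y = {x\<in>X. y \<in> F x}"

definition pseudo_orbit :: "'a::metric_space set \<Rightarrow> ('a \<Rightarrow> 'a set) \<Rightarrow> real \<Rightarrow> (nat \<Rightarrow> 'a) \<Rightarrow> bool" where
  "pseudo_orbit X G \<delta> xs \<longleftrightarrow> (\<forall>n. xs n \<in> X) \<and> (\<forall>n. infdist (xs (Suc n)) (G (xs n)) < \<delta>)"

definition sv_orbit :: "'a set \<Rightarrow> ('a \<Rightarrow> 'a set) \<Rightarrow> (nat \<Rightarrow> 'a) \<Rightarrow> bool" where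
  "sv_orbit X G ys \<longleftrightarrow> (\<forall>n. ys n \<in> X) \<and> (\<forall>n. ys (Suc n) \<in> G (ys n))"

definition shadowing :: "'a::metric_space set \<Rightarrow> ('a \<Rightarrow> 'a set) \<Rightarrow> bool" where
  "shadowing X G \<longleftrightarrow> (\<forall>\<epsilon>>0. \<exists>\<delta>>0. \<forall>xs. pseudo_orbit X G \<delta> xs \<longrightarrow>
      (\<exists>ys. sv_orbit X G ys \<and> (\<forall>n. dist (xs n) (ys n) < \<epsilon>)))"

end

theory Submission
  imports Defs
begin

text \<open>Continuity of F makes its graph closed, hence compact, and upgrades lower semicontinuity
to a uniform statement on X; openness of F makes F\<inverse> lower semicontinuous, and the graph of
F\<inverse> is the transpose of that of F. So F\<inverse> satisfies the same hypotheses used for F and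
(F\<inverse>)\<inverse> = F, and it suffices to show that shadowing passes from G to G\<inverse>.
By uniform lower semicontinuity, a fine pseudo-orbit of G\<inverse> read backwards on a window
[0, N] is a pseudo-orbit of G. Shadowing it by a G-orbit and reading that backwards gives a finite
G\<inverse>-orbit close to the window; a limit of these in the compact space of sequences in X,
taken along a subsequence, is a G\<inverse>-orbit because the graph of G\<inverse> is closed.\<close>

lemma infdist_lessE:
  assumes "A \<noteq> {}" "infdist x A < d"
  obtains a where "a \<in> A" "dist x a < d"
  using assms cINF_less_iff[OF assms(1) bdd_below_image_dist] by (auto simp: infdist_notempty)

lemma compact_sequences:
  assumes "compact X"
  shows "compact {f :: 'i \<Rightarrow> 'a::metric_space. \<forall>i. f i \<in> X}"
proof -
  have "compactin (product_topology (\<lambda>i. euclidean) UNIV) (PiE UNIV (\<lambda>i::'i. X))"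
    using assms by (simp add: compactin_PiE)
  moreover have "PiE UNIV (\<lambda>i. X) = {f :: 'i \<Rightarrow> 'a. \<forall>i. f i \<in> X}"
    by (auto simp: PiE_UNIV_domain)
  ultimately show ?thesis by (simp add: euclidean_product_topology)
qed

lemma sv_orbit_exists:
  assumes "\<And>x. x \<in> X \<Longrightarrow> G x \<noteq> {} \<and> G x \<subseteq> X" "p \<in> X"
  obtains ys where "sv_orbit X G ys" "ys 0 = p"
proof -
  have "\<exists>ys. \<forall>n. (ys n \<in> X \<and> (n = 0 \<longrightarrow> ys n = p)) \<and> ys (Suc n) \<in> G (ys n)"
    by (rule dependent_nat_choice) (use assms in auto)
  then show ?thesis using that unfolding sv_orbit_def by blast
qed

lemma sv_inverse_sv_inverse:
  assumes "\<And>x. x \<in> X \<Longrightarrow> F x \<subseteq> X" "x \<in> X"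
  shows "sv_inverse X (sv_inverse X F) x = F x"
  using assms unfolding sv_inverse_def by auto

lemma closed_Sigma_sv_inverse:
  assumes "closed (Sigma X F)" "\<And>x. x \<in> X \<Longrightarrow> F x \<subseteq> X"
  shows "closed (Sigma X (sv_inverse X F))"
proof -
  have "Sigma X (sv_inverse X F) = prod.swap -` Sigma X F"
    using assms(2) unfolding sv_inverse_def by fastforce
  then show ?thesis
    by (simp add: assms(1) continuous_closed_vimage continuous_intros prod.swap_def)
qed

lemma lsc_on_sv_inverse:
  assumes "sv_open_map X F"
  shows "lsc_on X (sv_inverse X F)"
  unfolding lsc_on_def
proof (intro ballI allI impI, elim conjE)
  fix y U assume U: "openin (top_of_set X) U" and meets: "sv_inverse X F y \<inter> U \<noteq> {}"
  let ?V = "\<Union>u\<in>U. F u"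
  have "openin (top_of_set X) ?V" "y \<in> ?V" "\<forall>y'\<in>?V. sv_inverse X F y' \<inter> U \<noteq> {}"
    using assms U meets openin_subset[OF U] unfolding sv_open_map_def sv_inverse_def by auto
  then show "\<exists>V. openin (top_of_set X) V \<and> y \<in> V \<and> (\<forall>y\<in>V. sv_inverse X F y \<inter> U \<noteq> {})"
    by blast
qed

lemma shadowing_cong:
  assumes "\<And>x. x \<in> X \<Longrightarrow> G x = G' x"
  shows "shadowing X G \<longleftrightarrow> shadowing X G'"
proof -
  have "pseudo_orbit X G = pseudo_orbit X G'" "sv_orbit X G = sv_orbit X G'"
    using assms unfolding pseudo_orbit_def sv_orbit_def by (auto simp: fun_eq_iff)
  then show ?thesis unfolding shadowing_def by simp
qed

lemma usc_on_imp_closed_Sigma: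
  assumes X: "closed X" and F: "sv_map_into X F" and usc: "usc_on X F"
  shows "closed (Sigma X F)"
  unfolding closed_sequential_limits
proof (intro allI impI, elim conjE)
  fix s l assume s: "\<forall>n. s n \<in> Sigma X F" and lim: "s \<longlonglongrightarrow> l"
  have fst_lim: "(\<lambda>n. fst (s n)) \<longlonglongrightarrow> fst l" and snd_lim: "(\<lambda>n. snd (s n)) \<longlonglongrightarrow> snd l"
    using lim by (auto intro: tendsto_fst tendsto_snd)
  have lX: "fst l \<in> X"
    using closed_sequentially[OF X _ fst_lim] s by (metis SigmaE prod.sel(1))
  define A where "A = F (fst l)"
  have A: "A \<noteq> {}" "closed A" using F lX unfolding sv_map_into_def A_def by (auto intro: compact_imp_closed)
  have "snd l \<in> A"
  proof (rule ccontr)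
    assume "snd l \<notin> A"
    then have e: "infdist (snd l) A > 0" using A infdist_pos_not_in_closed by blast
    define U where "U = X \<inter> {p. infdist p A < infdist (snd l) A / 2}"
    have "openin (top_of_set X) U" "A \<subseteq> U"
      using F lX e unfolding U_def A_def sv_map_into_def
      by (auto intro!: openin_open_Int open_Collect_less continuous_intros)
    then obtain V where V: "openin (top_of_set X) V" "fst l \<in> V" "\<forall>y\<in>V. F y \<subseteq> U"
      using usc lX unfolding usc_on_def A_def by meson
    then obtain T where T: "open T" "V = X \<inter> T" by (meson openin_open)
    have "eventually (\<lambda>n. fst (s n) \<in> T) sequentially"
      using topological_tendstoD[OF fst_lim T(1)] V(2) T(2) by auto
    moreover have "(\<lambda>n. infdist (snd (s n)) A) \<longlonglongrightarrow> infdist (snd l) A"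
      by (intro tendsto_intros snd_lim)
    then have "eventually (\<lambda>n. infdist (snd (s n)) A > infdist (snd l) A / 2) sequentially"
      using e by (intro order_tendstoD) auto
    ultimately have "eventually (\<lambda>n. False) sequentially"
    proof eventually_elim
      case (elim n)
      then have "snd (s n) \<in> U" using s T(2) V(3) by (metis IntI SigmaE prod.sel subsetD)
      then show False using elim unfolding U_def by auto
    qed
    then show False by simp
  qed
  then show "l \<in> Sigma X F" using lX A_def by (metis SigmaI prod.collapse)
qed

lemma lsc_on_uniformly:
  assumes K: "compact (Sigma X G)" and lsc: "lsc_on X G" and into: "\<And>x. x \<in> X \<Longrightarrow> G x \<subseteq> X"
    and e: "e > 0"
  obtains d where "d > 0"
    "\<And>z w y. z \<in> X \<Longrightarrow> w \<in> X \<Longrightarrow> dist z w < d \<Longrightarrow> y \<in> G z \<Longrightarrow> infdist y (G w) < e"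
proof -
  have "\<exists>r>0. \<forall>w\<in>X. dist (fst p) w < r \<longrightarrow> (\<exists>q\<in>G w. dist (snd p) q < e/2)"
    if p: "p \<in> Sigma X G" for p
  proof -
    let ?U = "X \<inter> ball (snd p) (e/2)"
    have pX: "fst p \<in> X" "snd p \<in> G (fst p)" using p by (auto simp: mem_Sigma_iff)
    then have "snd p \<in> G (fst p) \<inter> ?U" using into e by auto
    moreover have "openin (top_of_set X) ?U" by (simp add: openin_open_Int)
    ultimately obtain V where V: "openin (top_of_set X) V" "fst p \<in> V" "\<forall>w\<in>V. G w \<inter> ?U \<noteq> {}"
      using lsc pX(1) unfolding lsc_on_def by blast
    then obtain r where r: "r > 0" "ball (fst p) r \<inter> X \<subseteq> V" by (meson openin_contains_ball)
    show ?thesis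
    proof (intro exI[of _ r] conjI ballI impI)
      fix w assume "w \<in> X" "dist (fst p) w < r"
      then have "w \<in> V" using r by auto
      then obtain q where "q \<in> G w" "q \<in> ball (snd p) (e/2)" using V(3) by blast
      then show "\<exists>q\<in>G w. dist (snd p) q < e/2" by auto
    qed (fact r)
  qed
  then obtain R where R: "\<And>p. p \<in> Sigma X G \<Longrightarrow> R p > 0"
    "\<And>p w. p \<in> Sigma X G \<Longrightarrow> w \<in> X \<Longrightarrow> dist (fst p) w < R p \<Longrightarrow> \<exists>q\<in>G w. dist (snd p) q < e/2"
    using bchoice[of "Sigma X G"] by (metis (no_types, lifting))
  let ?cover = "(\<lambda>p. ball (fst p) (R p) \<times> ball (snd p) (e/2)) ` Sigma X G"
  have "Sigma X G \<subseteq> \<Union>?cover"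
  proof
    fix p assume p: "p \<in> Sigma X G"
    then have "p \<in> ball (fst p) (R p) \<times> ball (snd p) (e/2)" using R(1) e by (simp add: mem_Times_iff)
    then show "p \<in> \<Union>?cover" using p by blast
  qed
  moreover have "open B" if "B \<in> ?cover" for B using that by (auto simp: open_Times)
  ultimately obtain d where d: "d > 0" "\<And>p. p \<in> Sigma X G \<Longrightarrow> \<exists>B \<in> ?cover. ball p d \<subseteq> B"
    using Heine_Borel_lemma[OF K] by blast
  show ?thesis
  proof (rule that[OF d(1)])
    fix z w y assume "z \<in> X" "w \<in> X" "dist z w < d" "y \<in> G z"
    then obtain p where p: "p \<in> Sigma X G" and "ball (z, y) d \<subseteq> ball (fst p) (R p) \<times> ball (snd p) (e/2)"
      using d(2)[of "(z, y)"] by auto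
    moreover have "(w, y) \<in> ball (z, y) d" using \<open>dist z w < d\<close> by (simp add: dist_Pair_Pair)
    ultimately have "dist (fst p) w < R p" "dist (snd p) y < e/2" by auto
    then obtain q where "q \<in> G w" "dist (snd p) q < e/2" using R(2)[OF p \<open>w \<in> X\<close>] by blast
    then have "infdist y (G w) \<le> dist y q" "dist y q < e"
      using \<open>dist (snd p) y < e/2\<close> dist_triangle3[of y q "snd p"] by (auto intro: infdist_le)
    then show "infdist y (G w) < e" by linarith
  qed
qed

lemma reversed_pseudo_orbit_window:
  assumes G: "\<And>x. x \<in> X \<Longrightarrow> G x \<noteq> {} \<and> G x \<subseteq> X" and xs: "\<And>n. xs n \<in> X"
    and backward: "\<And>n. infdist (xs n) (G (xs (Suc n))) < \<delta>" and "\<delta> > 0"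
  obtains u where "pseudo_orbit X G \<delta> u" "\<And>k. k \<le> N \<Longrightarrow> u k = xs (N - k)"
proof -
  obtain ys where ys: "sv_orbit X G ys" "ys 0 = xs 0"
    using sv_orbit_exists[OF G xs] .
  define u where "u k = (if k \<le> N then xs (N - k) else ys (k - N))" for k
  have "infdist (u (Suc k)) (G (u k)) < \<delta>" for k
  proof (cases "k < N")
    case True
    then have "u (Suc k) = xs (N - Suc k)" "u k = xs (Suc (N - Suc k))"
      unfolding u_def by (auto simp: Suc_diff_Suc)
    then show ?thesis using backward by simp
  next
    case False
    then have "u (Suc k) = ys (Suc (k - N))" "u k = ys (k - N)"
      using ys(2) unfolding u_def by (auto simp: Suc_diff_le)
    then have "u (Suc k) \<in> G (u k)" using ys(1) unfolding sv_orbit_def by simp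
    then show ?thesis using \<open>\<delta> > 0\<close> by simp
  qed
  moreover have "u k \<in> X" for k using xs ys(1) unfolding u_def sv_orbit_def by simp
  ultimately show ?thesis using that[of u] unfolding pseudo_orbit_def u_def by simp
qed

lemma sv_orbit_limit_of_finite_orbits:
  fixes X :: "'a::metric_space set"
  assumes X: "compact X" and graph: "closed (Sigma X H)"
    and W: "\<And>N j. j \<le> N \<Longrightarrow> W N j \<in> X" "\<And>N j. j < N \<Longrightarrow> W N (Suc j) \<in> H (W N j)"
      "\<And>N j. j \<le> N \<Longrightarrow> dist (xs j) (W N j) \<le> r"
  shows "\<exists>w. sv_orbit X H w \<and> (\<forall>n. dist (xs n) (w n) \<le> r)"
proof -
  \<comment> \<open>padding by the arbitrary point W 0 0 puts all windows into the compact space of sequences in X\<close>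
  define W' where "W' N j = (if j \<le> N then W N j else W 0 0)" for N j
  have "seq_compact {f :: nat \<Rightarrow> 'a. \<forall>i. f i \<in> X}"
    using compact_sequences[OF X] by (rule compact_imp_seq_compact)
  moreover have "\<forall>N. W' N \<in> {f. \<forall>i. f i \<in> X}" using W(1) unfolding W'_def by (simp add: le0)
  ultimately obtain w s where w: "w \<in> {f. \<forall>i. f i \<in> X}" and s: "strict_mono s"
    and lim: "(W' \<circ> s) \<longlonglongrightarrow> w"
    by (rule seq_compactE)
  have coord: "(\<lambda>k. W' (s k) j) \<longlonglongrightarrow> w j" for j
  proof -
    have "isCont (\<lambda>f :: nat \<Rightarrow> 'a. f j) w"
      using continuous_on_eq_continuous_at[of UNIV "\<lambda>f :: nat \<Rightarrow> 'a. f j"] by simp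
    from isCont_tendsto_compose[OF this lim] show ?thesis by (simp add: o_def)
  qed
  have late: "eventually (\<lambda>k. n < s k) sequentially" for n
    using seq_suble[OF s] by (intro eventually_sequentiallyI[of "Suc n"]) (meson Suc_le_lessD le_trans)
  have "w (Suc n) \<in> H (w n)" for n
  proof -
    have "(\<lambda>k. (W' (s k) n, W' (s k) (Suc n))) \<longlonglongrightarrow> (w n, w (Suc n))"
      by (intro tendsto_Pair coord)
    moreover have "eventually (\<lambda>k. (W' (s k) n, W' (s k) (Suc n)) \<in> Sigma X H) sequentially"
      using late[of n] by eventually_elim (simp add: W'_def W(1,2) Suc_leI less_imp_le)
    ultimately have "(w n, w (Suc n)) \<in> Sigma X H"
      by (intro Lim_in_closed_set[OF graph]) simp_all
    then show ?thesis by simp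
  qed
  moreover have "dist (xs n) (w n) \<le> r" for n
  proof (rule tendsto_upperbound)
    show "(\<lambda>k. dist (xs n) (W' (s k) n)) \<longlonglongrightarrow> dist (xs n) (w n)"
      by (intro tendsto_intros coord)
    show "eventually (\<lambda>k. dist (xs n) (W' (s k) n) \<le> r) sequentially"
      using late[of n] by eventually_elim (simp add: W'_def W(3) less_imp_le)
  qed simp
  ultimately show ?thesis using w unfolding sv_orbit_def by blast
qed

lemma pseudo_orbit_sv_inverse_backward:
  assumes uniform: "\<And>z w y. z \<in> X \<Longrightarrow> w \<in> X \<Longrightarrow> dist z w < \<eta> \<Longrightarrow> y \<in> G z \<Longrightarrow> infdist y (G w) < \<delta>"
    and onto: "sv_onto X G" and pseudo: "pseudo_orbit X (sv_inverse X G) \<eta> xs"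
  shows "infdist (xs n) (G (xs (Suc n))) < \<delta>"
proof -
  have xs: "\<And>n. xs n \<in> X" using pseudo unfolding pseudo_orbit_def by blast
  have "sv_inverse X G (xs n) \<noteq> {}" using onto xs unfolding sv_onto_def sv_inverse_def by blast
  moreover have "infdist (xs (Suc n)) (sv_inverse X G (xs n)) < \<eta>"
    using pseudo unfolding pseudo_orbit_def by blast
  ultimately obtain z where "z \<in> sv_inverse X G (xs n)" "dist (xs (Suc n)) z < \<eta>"
    by (rule infdist_lessE)
  then show ?thesis using uniform[of z "xs (Suc n)" "xs n"] xs by (simp add: sv_inverse_def dist_commute)
qed

lemma sv_inverse_orbit_near_backward_pseudo_orbit:
  fixes X :: "'a::metric_space set"
  assumes X: "compact X" and graph: "closed (Sigma X G)" and G: "\<And>x. x \<in> X \<Longrightarrow> G x \<noteq> {} \<and> G x \<subseteq> X"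
    and shadow: "\<And>us. pseudo_orbit X G \<delta> us \<Longrightarrow> \<exists>ys. sv_orbit X G ys \<and> (\<forall>n. dist (us n) (ys n) < r)"
    and xs: "\<And>n. xs n \<in> X" and backward: "\<And>n. infdist (xs n) (G (xs (Suc n))) < \<delta>" and "\<delta> > 0"
  shows "\<exists>w. sv_orbit X (sv_inverse X G) w \<and> (\<forall>n. dist (xs n) (w n) \<le> r)"
proof -
  have "\<exists>ys. sv_orbit X G ys \<and> (\<forall>k\<le>N. dist (xs (N - k)) (ys k) < r)" for N
  proof -
    obtain u where u: "pseudo_orbit X G \<delta> u" "\<And>k. k \<le> N \<Longrightarrow> u k = xs (N - k)"
      using reversed_pseudo_orbit_window[of X G xs \<delta> N, OF G xs backward \<open>\<delta> > 0\<close>] by blast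
    then obtain ys where ys: "sv_orbit X G ys" "\<forall>n. dist (u n) (ys n) < r" using shadow by blast
    have "dist (xs (N - k)) (ys k) < r" if "k \<le> N" for k
      using ys(2) u(2)[OF that] by metis
    with ys(1) show ?thesis by blast
  qed
  then obtain YS where YS: "\<And>N. sv_orbit X G (YS N)" "\<And>N k. k \<le> N \<Longrightarrow> dist (xs (N - k)) (YS N k) < r"
    using choice[of "\<lambda>N ys. sv_orbit X G ys \<and> (\<forall>k\<le>N. dist (xs (N - k)) (ys k) < r)"] by blast
  have window_X: "YS N (N - j) \<in> X" for N j using YS(1) unfolding sv_orbit_def by blast
  have window_orbit: "YS N (N - Suc j) \<in> sv_inverse X G (YS N (N - j))" if "j < N" for N j
  proof -
    have "YS N (Suc (N - Suc j)) \<in> G (YS N (N - Suc j))" "YS N (N - Suc j) \<in> X"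
      using YS(1)[of N] unfolding sv_orbit_def by blast+
    then show ?thesis using Suc_diff_Suc[OF that] unfolding sv_inverse_def by simp
  qed
  have window_close: "dist (xs j) (YS N (N - j)) \<le> r" if "j \<le> N" for N j
    using YS(2)[of "N - j" N] that by simp
  have graph_inverse: "closed (Sigma X (sv_inverse X G))"
    by (rule closed_Sigma_sv_inverse[OF graph]) (use G in blast)
  show ?thesis
    by (rule sv_orbit_limit_of_finite_orbits[OF X graph_inverse, where W = "\<lambda>N j. YS N (N - j)"])
      (use window_X window_orbit window_close in auto)
qed

lemma shadowing_sv_inverse:
  fixes X :: "'a::metric_space set"
  assumes X: "compact X" and graph: "closed (Sigma X G)" and lsc: "lsc_on X G"
    and G: "\<And>x. x \<in> X \<Longrightarrow> G x \<noteq> {} \<and> G x \<subseteq> X" and onto: "sv_onto X G"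
    and shadowing: "shadowing X G"
  shows "shadowing X (sv_inverse X G)"
  unfolding shadowing_def
proof (intro allI impI)
  fix \<epsilon> :: real assume "\<epsilon> > 0"
  then obtain \<delta> where \<delta>: "\<delta> > 0" and shadow: "\<And>us. pseudo_orbit X G \<delta> us \<Longrightarrow>
      \<exists>ys. sv_orbit X G ys \<and> (\<forall>n. dist (us n) (ys n) < \<epsilon>/2)"
    using shadowing unfolding shadowing_def by (meson half_gt_zero)
  have "Sigma X G = (X \<times> X) \<inter> Sigma X G" using G by blast
  then have "compact (Sigma X G)" using X graph by (metis compact_Int_closed compact_Times)
  then obtain \<eta> where \<eta>: "\<eta> > 0" and uniform: "\<And>z w y. z \<in> X \<Longrightarrow> w \<in> X \<Longrightarrow> dist z w < \<eta> \<Longrightarrow>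
      y \<in> G z \<Longrightarrow> infdist y (G w) < \<delta>"
    using lsc_on_uniformly[OF _ lsc _ \<delta>] G by blast
  have "\<exists>ys. sv_orbit X (sv_inverse X G) ys \<and> (\<forall>n. dist (xs n) (ys n) < \<epsilon>)"
    if pseudo: "pseudo_orbit X (sv_inverse X G) \<eta> xs" for xs
  proof -
    have "\<And>n. xs n \<in> X" using pseudo unfolding pseudo_orbit_def by blast
    moreover have "\<And>n. infdist (xs n) (G (xs (Suc n))) < \<delta>"
      using pseudo_orbit_sv_inverse_backward[where G = G, OF uniform onto pseudo] .
    ultimately obtain w where w: "sv_orbit X (sv_inverse X G) w" "\<And>n. dist (xs n) (w n) \<le> \<epsilon>/2"
      using sv_inverse_orbit_near_backward_pseudo_orbit[where G = G, OF X graph G shadow _ _ \<delta>] by blast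
    have "dist (xs n) (w n) < \<epsilon>" for n using w(2)[of n] \<open>\<epsilon> > 0\<close> by linarith
    with w(1) show ?thesis by blast
  qed
  with \<eta> show "\<exists>\<eta>>0. \<forall>xs. pseudo_orbit X (sv_inverse X G) \<eta> xs \<longrightarrow>
      (\<exists>ys. sv_orbit X (sv_inverse X G) ys \<and> (\<forall>n. dist (xs n) (ys n) < \<epsilon>))"
    by blast
qed

theorem mainTheorem7:
  fixes X :: "'a::metric_space set" and F :: "'a \<Rightarrow> 'a set"
  assumes "compact X"
    and "sv_map_into X F"
    and "sv_open_map X F"
    and "sv_onto X F"
    and "sv_continuous_on X F"
  shows "shadowing X F \<longleftrightarrow> shadowing X (sv_inverse X F)"
proof -
  have F: "\<And>x. x \<in> X \<Longrightarrow> F x \<noteq> {} \<and> F x \<subseteq> X"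
    using assms(2) unfolding sv_map_into_def by blast
  have F_inv: "\<And>y. y \<in> X \<Longrightarrow> sv_inverse X F y \<noteq> {} \<and> sv_inverse X F y \<subseteq> X"
    using assms(4) unfolding sv_onto_def sv_inverse_def by blast
  have "usc_on X F" "lsc_on X F" using assms(5) unfolding sv_continuous_on_def by blast+
  then have graph: "closed (Sigma X F)"
    using usc_on_imp_closed_Sigma[OF compact_imp_closed[OF assms(1)] assms(2)] by blast
  have "shadowing X F \<Longrightarrow> shadowing X (sv_inverse X F)"
    by (rule shadowing_sv_inverse[OF assms(1) graph \<open>lsc_on X F\<close> F assms(4)])
  moreover have "shadowing X (sv_inverse X F) \<Longrightarrow> shadowing X (sv_inverse X (sv_inverse X F))"
  proof (rule shadowing_sv_inverse[OF assms(1) _ lsc_on_sv_inverse[OF assms(3)] F_inv])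
    show "closed (Sigma X (sv_inverse X F))" using closed_Sigma_sv_inverse[OF graph] F by blast
    show "sv_onto X (sv_inverse X F)" using F unfolding sv_onto_def sv_inverse_def by blast
  qed
  moreover have "shadowing X (sv_inverse X (sv_inverse X F)) \<longleftrightarrow> shadowing X F"
    using F by (intro shadowing_cong) (simp add: sv_inverse_sv_inverse)
  ultimately show ?thesis by blast
qed

end
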